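(* Let $\varrho\in C^2(\mathbb{C};\mathbb{C})$ be not $\mathbb{R}$-affine, $K\subseteq\mathbb{C}^2$ compact and $\varepsilon>0$. Then there exist $\mathbb{C}$-affine maps $\phi:\mathbb{C}^2\to\mathbb{C}^{12}$ and $\psi:\mathbb{C}^{12}\to\mathbb{C}$ such that at least one of the three inequalities $$\sup_{(z,w)\in K}|(\psi\circ\varrho^{\times12}\circ\phi)(z,w)-zw|<\varepsilon,\quad \sup_{(z,w)\in K}|(\psi\circ\varrho^{\times12}\circ\phi)(z,w)-z\overline{w}|<\varepsilon,\quad \sup_{(z,w)\in K}|(\psi\circ\varrho^{\times12}\circ\phi)(z,w)-\overline{zw}|<\varepsilon$$ holds.
   Context: $\varrho$ is $\mathbb{R}$-affine if it is affine as a map $\mathbb{R}^2\to\mathbb{R}^2$ under $\mathbb{C}\cong\mathbb{R}^2$. A map $\mathbb{C}^a\to\mathbb{C}^b$ is $\mathbb{C}$-affine if it has the form $z\mapsto Az+b$ with complex $A,b$. $\varrho^{\times12}$ applies $\varrho$ componentwise on $\mathbb{C}^{12}$. $C^2(\mathbb{C};\mathbb{C})$: continuous partial derivatives (real sense) up to order 2. *)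

theory Defs
  imports "HOL-Analysis.Analysis"
begin

text \<open>C^2 in the real sense: twice Frechet differentiable (complex viewed as R^2)
  with continuous second derivative.\<close>
definition C2_real :: "(complex \<Rightarrow> complex) \<Rightarrow> bool" where
  "C2_real f \<longleftrightarrow>
     (\<exists>f' :: complex \<Rightarrow> (complex \<Rightarrow>\<^sub>L complex).
      \<exists>f'' :: complex \<Rightarrow> (complex \<Rightarrow>\<^sub>L (complex \<Rightarrow>\<^sub>L complex)).
        (\<forall>x. (f has_derivative blinfun_apply (f' x)) (at x)) \<and>
        (\<forall>x. (f' has_derivative blinfun_apply (f'' x)) (at x)) \<and>
        continuous_on UNIV f'')"

text \<open>R-affine: affine as a map R^2 -> R^2 (linear means R-linear here).\<close>
definition R_affine :: "(complex \<Rightarrow> complex) \<Rightarrow> bool" where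
  "R_affine f \<longleftrightarrow> (\<exists>L b. linear L \<and> (\<forall>z. f z = L z + b))"

definition C_affine :: "(complex^'a \<Rightarrow> complex^'b) \<Rightarrow> bool" where
  "C_affine f \<longleftrightarrow> (\<exists>(A::complex^'a^'b) b. \<forall>x. f x = A *v x + b)"

definition C_affine_scalar :: "(complex^'a \<Rightarrow> complex) \<Rightarrow> bool" where
  "C_affine_scalar f \<longleftrightarrow> (\<exists>(d::complex^'a) e. \<forall>x. f x = (\<Sum>j\<in>UNIV. d$j * x$j) + e)"

definition rho_vec :: "(complex \<Rightarrow> complex) \<Rightarrow> complex^'n \<Rightarrow> complex^'n" where
  "rho_vec \<rho> u = (\<chi> j. \<rho> (u$j))"

end

theory Submission
  imports Defs
begin

text \<open>
  Since \<open>\<rho>\<close> is not \<open>\<real>\<close>-affine, its second derivative \<open>T = D\<^sup>2\<rho>(z)\<close> is nonzero at some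
  point \<open>z\<close>. As an \<open>\<real>\<close>-bilinear form on \<open>\<complex>\<close>,
  \<open>T u v = \<alpha> u v + \<beta> u (cnj v) + \<gamma> (cnj u) v + \<delta> cnj (u v)\<close> with one coefficient nonzero,
  and a combination of \<open>T\<close> at arguments rotated by \<open>\<i>\<close> isolates it; the \<open>\<gamma>\<close>-term gives
  \<open>x\<^sub>1 cnj x\<^sub>2\<close> after exchanging the variables. On compact sets \<open>T u v\<close> is the uniform
  limit of the rescaled second differences \<open>(\<rho>(z+su+sv) - \<rho>(z+su) - \<rho>(z+sv) + \<rho>(z)) / s\<^sup>2\<close>,
  and the four second differences of the rotated combination need only twelve non-constant
  evaluations of \<open>\<rho>\<close> at \<open>\<complex>\<close>-affine functions of the input, i.e.\ a network
  \<open>\<psi> \<circ> rho_vec \<rho> \<circ> \<phi>\<close> with twelve neurons.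
\<close>

definition second_difference :: "('a::ab_group_add \<Rightarrow> 'b::ab_group_add) \<Rightarrow> 'a \<Rightarrow> 'a \<Rightarrow> 'a \<Rightarrow> 'b" where
  "second_difference f z h k = f (z + h + k) - f (z + h) - f (z + k) + f z"

lemma second_derivative_zero_imp_affine:
  fixes f :: "'a::real_normed_vector \<Rightarrow> 'b::real_normed_vector"
  assumes f': "\<And>x. (f has_derivative blinfun_apply (f' x)) (at x)"
    and f'': "\<And>x. (f' has_derivative blinfun_apply (f'' x)) (at x)"
    and zero: "\<And>x. f'' x = 0"
  shows "\<exists>L b. linear L \<and> (\<forall>z. f z = L z + b)"
proof -
  obtain L where L: "\<And>x. f' x = L"
    using has_derivative_zero_constant[of UNIV f'] f'' zero
    by (auto simp: zero_blinfun.rep_eq[abs_def] has_derivative_at_withinI)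
  have "((\<lambda>x. f x - L x) has_derivative (\<lambda>h. 0)) (at x within UNIV)" for x
    using f'[of x] L by (auto intro!: derivative_eq_intros)
  then obtain b where "\<And>x. f x - L x = b"
    using has_derivative_zero_constant[of UNIV "\<lambda>x. f x - L x"] by auto
  then have "\<forall>z. f z = L z + b"
    by (metis add.commute diff_add_cancel)
  then show ?thesis
    using blinfun.bounded_linear_right bounded_linear.linear by blast
qed

lemma onorm_blinfun_apply_diff: "onorm (blinfun_apply A - blinfun_apply B) = norm (A - B)"
  by (simp add: norm_blinfun.rep_eq minus_blinfun.rep_eq[abs_def] fun_diff_def)

lemma second_difference_estimate:
  fixes f :: "'a::real_normed_vector \<Rightarrow> 'b::real_normed_vector"
  assumes f': "\<And>x. (f has_derivative blinfun_apply (f' x)) (at x)"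
    and f'': "\<And>x. (f' has_derivative blinfun_apply (f'' x)) (at x)"
    and cont: "isCont f'' z" and "\<eta> > 0"
  shows "\<exists>\<delta>>0. \<forall>h k. norm h + norm k < \<delta> \<longrightarrow>
    norm (second_difference f z h k - f'' z h k) \<le> \<eta> * norm h * norm k"
proof -
  obtain \<delta> where "\<delta> > 0" and \<delta>: "\<And>y. dist y z < \<delta> \<Longrightarrow> norm (f'' y - f'' z) < \<eta>"
    using cont \<open>\<eta> > 0\<close> unfolding continuous_at_eps_delta dist_norm by blast
  have f'_linearization: "norm (f' (a + h) - f' a - f'' z h) \<le> \<eta> * norm h"
    if "norm (a - z) + norm h < \<delta>" for a h
  proof -
    have "a + t *\<^sub>R ((a + h) - a) \<in> ball z \<delta>" if "t \<in> {0..1}" for t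
    proof -
      have "norm (a + t *\<^sub>R h - z) \<le> norm (a - z) + t * norm h"
        using norm_triangle_ineq[of "a - z" "t *\<^sub>R h"] that by (simp add: algebra_simps)
      also have "\<dots> \<le> norm (a - z) + norm h"
        using that by (simp add: mult_left_le_one_le)
      finally show ?thesis
        using \<open>norm (a - z) + norm h < \<delta>\<close> by (simp add: dist_norm norm_minus_commute)
    qed
    then have "norm (f' (a + h) - f' a - f'' z ((a + h) - a)) \<le> norm ((a + h) - a) * \<eta>"
      using \<delta> \<open>\<delta> > 0\<close>
      by (intro differentiable_bound_linearization[where S="ball z \<delta>"])
        (auto simp: has_derivative_at_withinI[OF f''] onorm_blinfun_apply_diff dist_commute less_imp_le)
    then show ?thesis
      by (simp add: mult.commute)
  qed
  show ?thesis
  proof (intro exI[of _ \<delta>] conjI allI impI \<open>\<delta> > 0\<close>)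
    fix h k :: 'a
    assume hk: "norm h + norm k < \<delta>"
    define G where "G x = f (x + h) - f x - f'' z h x" for x :: 'a
    have "norm (G (z + k) - G z) \<le> (\<eta> * norm h) * norm ((z + k) - z)"
    proof (rule differentiable_bound[where S="closed_segment z (z + k)"
          and f'="\<lambda>x. blinfun_apply (f' (x + h) - f' x - f'' z h)"])
      fix x
      assume x: "x \<in> closed_segment z (z + k)"
      have "((\<lambda>x. f (x + h)) has_derivative blinfun_apply (f' (x + h))) (at x)"
        using has_derivative_compose[OF has_derivative_add_const[OF has_derivative_ident] f']
        by (simp add: o_def)
      then have "(G has_derivative (\<lambda>d. f' (x + h) d - f' x d - f'' z h d)) (at x)"
        unfolding G_def using f' by (auto intro!: derivative_eq_intros)
      then show "(G has_derivative blinfun_apply (f' (x + h) - f' x - f'' z h)) (at x within closed_segment z (z + k))"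
        by (simp add: minus_blinfun.rep_eq[abs_def] has_derivative_at_withinI)
      have "norm (x - z) \<le> norm k"
        using segment_bound(1)[OF x] by simp
      then have "norm (f' (x + h) - f' x - f'' z h) \<le> \<eta> * norm h"
        using hk by (intro f'_linearization) auto
      then show "onorm (blinfun_apply (f' (x + h) - f' x - f'' z h)) \<le> \<eta> * norm h"
        by (simp add: norm_blinfun.rep_eq[symmetric])
    qed auto
    moreover have "G (z + k) - G z = second_difference f z h k - f'' z h k"
      unfolding G_def second_difference_def by (simp add: algebra_simps blinfun.add_right)
    ultimately show "norm (second_difference f z h k - f'' z h k) \<le> \<eta> * norm h * norm k"
      by (simp add: mult_ac)
  qed
qed

lemma rescaled_second_difference_uniform:
  fixes f :: "'a::real_normed_vector \<Rightarrow> 'b::real_normed_vector"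
  assumes f': "\<And>x. (f has_derivative blinfun_apply (f' x)) (at x)"
    and f'': "\<And>x. (f' has_derivative blinfun_apply (f'' x)) (at x)"
    and cont: "isCont f'' z" and "\<eta> > 0"
  shows "\<exists>s>0. \<forall>u v. norm u \<le> R \<longrightarrow> norm v \<le> R \<longrightarrow>
    norm ((1 / s\<^sup>2) *\<^sub>R second_difference f z (s *\<^sub>R u) (s *\<^sub>R v) - f'' z u v) \<le> \<eta>"
proof -
  define R' where "R' = \<bar>R\<bar> + 1"
  have "R' > 0"
    unfolding R'_def by simp
  obtain \<delta> where "\<delta> > 0" and \<delta>: "\<And>h k. norm h + norm k < \<delta> \<Longrightarrow>
      norm (second_difference f z h k - f'' z h k) \<le> \<eta> / R'\<^sup>2 * norm h * norm k"
    using second_difference_estimate[OF f' f'' cont, of "\<eta> / R'\<^sup>2"] \<open>\<eta> > 0\<close> \<open>R' > 0\<close> by auto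
  define s where "s = \<delta> / (3 * R')"
  have "s > 0"
    unfolding s_def using \<open>\<delta> > 0\<close> \<open>R' > 0\<close> by simp
  have "norm ((1 / s\<^sup>2) *\<^sub>R second_difference f z (s *\<^sub>R u) (s *\<^sub>R v) - f'' z u v) \<le> \<eta>"
    if u: "norm u \<le> R" and v: "norm v \<le> R" for u v :: 'a
  proof -
    have "norm u \<le> R'" "norm v \<le> R'"
      using u v unfolding R'_def by linarith+
    then have "norm (s *\<^sub>R u) + norm (s *\<^sub>R v) \<le> s * R' + s * R'"
      using \<open>s > 0\<close> by (intro add_mono) (auto intro: mult_left_mono)
    also have "\<dots> < \<delta>"
      unfolding s_def using \<open>\<delta> > 0\<close> \<open>R' > 0\<close> by simp
    finally have "norm (second_difference f z (s *\<^sub>R u) (s *\<^sub>R v) - f'' z (s *\<^sub>R u) (s *\<^sub>R v))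
        \<le> \<eta> / R'\<^sup>2 * norm (s *\<^sub>R u) * norm (s *\<^sub>R v)"
      by (rule \<delta>)
    moreover have "f'' z (s *\<^sub>R u) (s *\<^sub>R v) = s\<^sup>2 *\<^sub>R f'' z u v"
      by (simp add: blinfun.scaleR_left blinfun.scaleR_right power2_eq_square)
    ultimately have "norm (second_difference f z (s *\<^sub>R u) (s *\<^sub>R v) - s\<^sup>2 *\<^sub>R f'' z u v)
        \<le> \<eta> / R'\<^sup>2 * (s * norm u) * (s * norm v)"
      using \<open>s > 0\<close> by simp
    also have "\<dots> \<le> \<eta> / R'\<^sup>2 * ((s * R') * (s * R'))"
    proof -
      have "s * norm u \<le> s * R'" "s * norm v \<le> s * R'"
        using \<open>norm u \<le> R'\<close> \<open>norm v \<le> R'\<close> \<open>s > 0\<close> by simp_all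
      then have "(s * norm u) * (s * norm v) \<le> (s * R') * (s * R')"
        using \<open>s > 0\<close> \<open>R' > 0\<close> by (intro mult_mono) auto
      then show ?thesis
        using \<open>\<eta> > 0\<close> by (simp only: mult.assoc) (rule mult_left_mono, auto)
    qed
    also have "\<dots> = s\<^sup>2 * \<eta>"
      using \<open>R' > 0\<close> by (simp add: power2_eq_square)
    finally have "norm (second_difference f z (s *\<^sub>R u) (s *\<^sub>R v) - s\<^sup>2 *\<^sub>R f'' z u v) / s\<^sup>2 \<le> \<eta>"
      using \<open>s > 0\<close> by (simp add: pos_divide_le_eq mult.commute)
    moreover have "(1 / s\<^sup>2) *\<^sub>R second_difference f z (s *\<^sub>R u) (s *\<^sub>R v) - f'' z u v
        = (1 / s\<^sup>2) *\<^sub>R (second_difference f z (s *\<^sub>R u) (s *\<^sub>R v) - s\<^sup>2 *\<^sub>R f'' z u v)"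
      using \<open>s > 0\<close> by (simp add: scaleR_diff_right)
    ultimately show ?thesis
      by simp
  qed
  then show ?thesis
    using \<open>s > 0\<close> by blast
qed

definition rotated_combination ::
    "complex \<Rightarrow> complex \<Rightarrow> complex \<Rightarrow> complex \<Rightarrow> (complex \<Rightarrow> complex \<Rightarrow> complex) \<Rightarrow> complex \<Rightarrow> complex \<Rightarrow> complex"
  where "rotated_combination c1 c2 c3 c4 B u v =
    c1 * B u v + c2 * B u (\<i> * v) + c3 * B (\<i> * u) v + c4 * B (\<i> * u) (\<i> * v)"

lemma rotated_combination_diff:
  "rotated_combination c1 c2 c3 c4 (\<lambda>h k. B h k - B' h k) u v =
    rotated_combination c1 c2 c3 c4 B u v - rotated_combination c1 c2 c3 c4 B' u v"
  by (simp add: rotated_combination_def algebra_simps)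

lemma rotated_combination_divide_coeffs:
  "rotated_combination (c1 / w) (c2 / w) (c3 / w) (c4 / w) B u v = rotated_combination c1 c2 c3 c4 B u v / w"
  by (simp add: rotated_combination_def add_divide_distrib)

lemma norm_rotated_combination_le:
  assumes "\<And>h k. norm h = norm u \<Longrightarrow> norm k = norm v \<Longrightarrow> norm (B h k) \<le> \<eta>"
  shows "norm (rotated_combination c1 c2 c3 c4 B u v) \<le> (norm c1 + norm c2 + norm c3 + norm c4) * \<eta>"
proof -
  have "norm (c * B h k) \<le> norm c * \<eta>" if "norm h = norm u" "norm k = norm v" for c h k
    using assms[OF that] by (simp add: norm_mult mult_left_mono)
  then have "norm (c1 * B u v) + norm (c2 * B u (\<i> * v)) + norm (c3 * B (\<i> * u) v)
      + norm (c4 * B (\<i> * u) (\<i> * v)) \<le> (norm c1 + norm c2 + norm c3 + norm c4) * \<eta>"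
    by (simp add: norm_mult distrib_right add_mono)
  then show ?thesis
    unfolding rotated_combination_def
    by (rule order_trans[rotated]) (intro order_trans[OF norm_triangle_ineq] add_mono order_refl)
qed

lemma blinfun_complex_expansion:
  fixes T :: "complex \<Rightarrow>\<^sub>L complex \<Rightarrow>\<^sub>L complex"
  shows "T u v = of_real (Re u * Re v) * T 1 1 + of_real (Re u * Im v) * T 1 \<i>
    + of_real (Im u * Re v) * T \<i> 1 + of_real (Im u * Im v) * T \<i> \<i>"
proof -
  have split: "w = Re w *\<^sub>R 1 + Im w *\<^sub>R \<i>" for w :: complex
    by (simp add: complex_eq_iff)
  have "T u v = T (Re u *\<^sub>R 1 + Im u *\<^sub>R \<i>) (Re v *\<^sub>R 1 + Im v *\<^sub>R \<i>)"
    using split[of u] split[of v] by simp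
  then show ?thesis
    by (simp only: blinfun.add_left blinfun.add_right blinfun.scaleR_left blinfun.scaleR_right)
      (simp add: scaleR_conv_of_real algebra_simps)
qed

text \<open>With \<open>T u v = \<alpha> u v + \<beta> u (cnj v) + \<gamma> (cnj u) v + \<delta> cnj (u v)\<close>, the coefficients
  on the right are \<open>4\<alpha>, 4\<beta>, 4\<gamma>, 4\<delta>\<close>.\<close>

lemma rotated_combination_blinfun_complex:
  fixes T :: "complex \<Rightarrow>\<^sub>L complex \<Rightarrow>\<^sub>L complex"
  shows "rotated_combination 1 (- \<i>) (- \<i>) (- 1) (\<lambda>h k. T h k) u v
      = (T 1 1 - \<i> * T 1 \<i> - \<i> * T \<i> 1 - T \<i> \<i>) * (u * v)"
    and "rotated_combination 1 \<i> (- \<i>) 1 (\<lambda>h k. T h k) u v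
      = (T 1 1 + \<i> * T 1 \<i> - \<i> * T \<i> 1 + T \<i> \<i>) * (u * cnj v)"
    and "rotated_combination 1 (- \<i>) \<i> 1 (\<lambda>h k. T h k) u v
      = (T 1 1 - \<i> * T 1 \<i> + \<i> * T \<i> 1 + T \<i> \<i>) * (cnj u * v)"
    and "rotated_combination 1 \<i> \<i> (- 1) (\<lambda>h k. T h k) u v
      = (T 1 1 + \<i> * T 1 \<i> + \<i> * T \<i> 1 - T \<i> \<i>) * cnj (u * v)"
proof -
  define a b c d where "a = T 1 1" and "b = T 1 \<i>" and "c = T \<i> 1" and "d = T \<i> \<i>"
  have T: "T x y = of_real (Re x * Re y) * a + of_real (Re x * Im y) * b
      + of_real (Im x * Re y) * c + of_real (Im x * Im y) * d" for x y
    unfolding a_def b_def c_def d_def by (rule blinfun_complex_expansion)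
  show "rotated_combination 1 (- \<i>) (- \<i>) (- 1) (\<lambda>h k. T h k) u v = (a - \<i> * b - \<i> * c - d) * (u * v)"
    and "rotated_combination 1 \<i> (- \<i>) 1 (\<lambda>h k. T h k) u v = (a + \<i> * b - \<i> * c + d) * (u * cnj v)"
    and "rotated_combination 1 (- \<i>) \<i> 1 (\<lambda>h k. T h k) u v = (a - \<i> * b + \<i> * c + d) * (cnj u * v)"
    and "rotated_combination 1 \<i> \<i> (- 1) (\<lambda>h k. T h k) u v = (a + \<i> * b + \<i> * c - d) * cnj (u * v)"
    by (simp_all add: rotated_combination_def T complex_eq_iff algebra_simps)
qed

lemma blinfun_complex_component_nonzero:
  fixes T :: "complex \<Rightarrow>\<^sub>L complex \<Rightarrow>\<^sub>L complex"
  assumes "T \<noteq> 0"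
  shows "T 1 1 - \<i> * T 1 \<i> - \<i> * T \<i> 1 - T \<i> \<i> \<noteq> 0 \<or> T 1 1 + \<i> * T 1 \<i> - \<i> * T \<i> 1 + T \<i> \<i> \<noteq> 0 \<or>
    T 1 1 - \<i> * T 1 \<i> + \<i> * T \<i> 1 + T \<i> \<i> \<noteq> 0 \<or> T 1 1 + \<i> * T 1 \<i> + \<i> * T \<i> 1 - T \<i> \<i> \<noteq> 0"
proof (rule ccontr)
  assume "\<not> ?thesis"
  then have "T 1 1 = 0 \<and> T 1 \<i> = 0 \<and> T \<i> 1 = 0 \<and> T \<i> \<i> = 0"
    by (simp add: complex_eq_iff)
  then have "T = 0"
    by (intro blinfun_eqI) (subst blinfun_complex_expansion, simp)
  with assms show False ..
qed

lemma shallow_network_sum_list: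
  fixes \<rho> :: "complex \<Rightarrow> complex" and L :: "(complex \<times> (complex^'m::finite) \<times> complex) list" and e :: complex
  assumes "length L = CARD('n::finite)"
  shows "\<exists>(\<phi> :: complex^'m \<Rightarrow> complex^'n) (\<psi> :: complex^'n \<Rightarrow> complex). C_affine \<phi> \<and> C_affine_scalar \<psi> \<and>
    (\<forall>x. (\<psi> \<circ> rho_vec \<rho> \<circ> \<phi>) x = sum_list (map (\<lambda>(d, r, c). d * \<rho> ((\<Sum>j\<in>UNIV. r$j * x$j) + c)) L) + e)"
proof -
  obtain g :: "nat \<Rightarrow> 'n" where "bij_betw g {0..<length L} UNIV"
    using ex_bij_betw_nat_finite[of "UNIV :: 'n set"] assms by auto
  define h where "h = inv_into {0..<length L} g"
  have h: "bij_betw h UNIV {0..<length L}"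
    unfolding h_def by (rule bij_betw_inv_into) fact
  define A :: "complex^'m^'n" where "A = (\<chi> i j. fst (snd (L ! h i)) $ j)"
  define b :: "complex^'n" where "b = (\<chi> i. snd (snd (L ! h i)))"
  define d :: "complex^'n" where "d = (\<chi> i. fst (L ! h i))"
  define \<phi> :: "complex^'m \<Rightarrow> complex^'n" where "\<phi> x = A *v x + b" for x
  define \<psi> :: "complex^'n \<Rightarrow> complex" where "\<psi> y = (\<Sum>i\<in>UNIV. d $ i * y $ i) + e" for y
  define F where "F n x = (case L ! n of (d, r, c) \<Rightarrow> d * \<rho> ((\<Sum>j\<in>UNIV. r$j * x$j) + c))" for n x
  have "(\<psi> \<circ> rho_vec \<rho> \<circ> \<phi>) x = sum_list (map (\<lambda>(d, r, c). d * \<rho> ((\<Sum>j\<in>UNIV. r$j * x$j) + c)) L) + e"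
    for x
  proof -
    have "(\<psi> \<circ> rho_vec \<rho> \<circ> \<phi>) x = (\<Sum>i\<in>UNIV. F (h i) x) + e"
      unfolding \<psi>_def \<phi>_def F_def rho_vec_def A_def b_def d_def
      by (auto simp: matrix_vector_mult_def split: prod.splits intro!: sum.cong)
    also have "(\<Sum>i\<in>UNIV. F (h i) x) = (\<Sum>n\<in>{0..<length L}. F n x)"
      by (rule sum.reindex_bij_betw[OF h])
    also have "\<dots> = sum_list (map (\<lambda>(d, r, c). d * \<rho> ((\<Sum>j\<in>UNIV. r$j * x$j) + c)) L)"
      unfolding F_def sum_list_sum_nth by simp
    finally show ?thesis .
  qed
  then show ?thesis
    unfolding C_affine_def C_affine_scalar_def by (intro exI[of _ \<phi>] exI[of _ \<psi>]) (auto simp: \<phi>_def \<psi>_def)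
qed


lemma sum_axis_mult: "(\<Sum>j\<in>UNIV. axis p a $ j * x $ j) = (a :: 'a::comm_ring_1) * x $ p"
  by (simp add: axis_def if_distrib[where f="\<lambda>c. c * _"] cong: if_cong)

lemma rotated_second_difference_network:
  fixes \<rho> :: "complex \<Rightarrow> complex" and p q :: "'m::finite"
  shows "\<exists>(\<phi> :: complex^'m \<Rightarrow> complex^12) (\<psi> :: complex^12 \<Rightarrow> complex). C_affine \<phi> \<and> C_affine_scalar \<psi> \<and>
    (\<forall>x. (\<psi> \<circ> rho_vec \<rho> \<circ> \<phi>) x =
      rotated_combination c1 c2 c3 c4 (\<lambda>h k. second_difference \<rho> z (w * h) (w * k)) (x$p) (x$q))"
proof -
  \<comment> \<open>Each second difference contributes three neurons; its constant term \<open>\<rho> z\<close> goes into \<open>\<psi>\<close>.\<close>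
  define r :: "complex \<Rightarrow> complex \<Rightarrow> complex^'m" where "r a b = axis p a + axis q b" for a b
  define w' where "w' = \<i> * w"
  define L where "L =
    [(c1, r w w, z), (- c1, r w 0, z), (- c1, r 0 w, z),
     (c2, r w w', z), (- c2, r w 0, z), (- c2, r 0 w', z),
     (c3, r w' w, z), (- c3, r w' 0, z), (- c3, r 0 w, z),
     (c4, r w' w', z), (- c4, r w' 0, z), (- c4, r 0 w', z)]"
  obtain \<phi> :: "complex^'m \<Rightarrow> complex^12" and \<psi> :: "complex^12 \<Rightarrow> complex"
    where "C_affine \<phi>" "C_affine_scalar \<psi>" and network: "\<And>x. (\<psi> \<circ> rho_vec \<rho> \<circ> \<phi>) x =
      sum_list (map (\<lambda>(d, r, c). d * \<rho> ((\<Sum>j\<in>UNIV. r$j * x$j) + c)) L) + (c1 + c2 + c3 + c4) * \<rho> z"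
    using shallow_network_sum_list[where 'n = 12, of L \<rho> "(c1 + c2 + c3 + c4) * \<rho> z"]
    unfolding L_def by auto
  have "(\<psi> \<circ> rho_vec \<rho> \<circ> \<phi>) x =
      rotated_combination c1 c2 c3 c4 (\<lambda>h k. second_difference \<rho> z (w * h) (w * k)) (x$p) (x$q)" for x
    unfolding network L_def r_def w'_def rotated_combination_def second_difference_def
    by (simp add: distrib_right sum.distrib sum_axis_mult) (simp add: algebra_simps)
  then show ?thesis
    using \<open>C_affine \<phi>\<close> \<open>C_affine_scalar \<psi>\<close> by blast
qed

lemma second_derivative_component_approximable:
  fixes \<rho> :: "complex \<Rightarrow> complex" and K :: "(complex^'m) set" and p q :: "'m::finite"
    and g :: "complex^'m \<Rightarrow> complex"
  assumes f': "\<And>x. (\<rho> has_derivative blinfun_apply (f' x)) (at x)"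
    and f'': "\<And>x. (f' has_derivative blinfun_apply (f'' x)) (at x)"
    and cont: "isCont f'' z" and "compact K" and "\<epsilon> > 0" and "\<mu> \<noteq> 0"
    and component: "\<And>x. rotated_combination c1 c2 c3 c4 (\<lambda>h k. f'' z h k) (x$p) (x$q) = \<mu> * g x"
  shows "\<exists>(\<phi> :: complex^'m \<Rightarrow> complex^12) (\<psi> :: complex^12 \<Rightarrow> complex). C_affine \<phi> \<and> C_affine_scalar \<psi> \<and>
    (SUP x\<in>K. ereal (norm ((\<psi> \<circ> rho_vec \<rho> \<circ> \<phi>) x - g x))) < ereal \<epsilon>"
proof -
  obtain R where R: "\<And>x. x \<in> K \<Longrightarrow> norm x \<le> R"
    using compact_imp_bounded[OF \<open>compact K\<close>] unfolding bounded_iff by blast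
  define C where "C = norm c1 + norm c2 + norm c3 + norm c4"
  have "C \<ge> 0"
    unfolding C_def by simp
  define \<eta> where "\<eta> = \<epsilon> * norm \<mu> / (2 * (C + 1))"
  have "\<eta> > 0"
    unfolding \<eta>_def using \<open>\<epsilon> > 0\<close> \<open>\<mu> \<noteq> 0\<close> \<open>C \<ge> 0\<close> by simp
  obtain s where "s > 0" and s: "\<And>u v. norm u \<le> R \<Longrightarrow> norm v \<le> R \<Longrightarrow>
      norm ((1 / s\<^sup>2) *\<^sub>R second_difference \<rho> z (s *\<^sub>R u) (s *\<^sub>R v) - f'' z u v) \<le> \<eta>"
    using rescaled_second_difference_uniform[OF f' f'' cont \<open>\<eta> > 0\<close>, of R] by blast
  define B where "B h k = (1 / s\<^sup>2) *\<^sub>R second_difference \<rho> z (s *\<^sub>R h) (s *\<^sub>R k)" for h k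
  define w where "w = \<mu> * of_real (s\<^sup>2)"
  obtain \<phi> :: "complex^'m \<Rightarrow> complex^12" and \<psi> :: "complex^12 \<Rightarrow> complex"
    where "C_affine \<phi>" "C_affine_scalar \<psi>" and network: "\<And>x. (\<psi> \<circ> rho_vec \<rho> \<circ> \<phi>) x =
      rotated_combination (c1 / w) (c2 / w) (c3 / w) (c4 / w)
        (\<lambda>h k. second_difference \<rho> z (of_real s * h) (of_real s * k)) (x$p) (x$q)"
    using rotated_second_difference_network by blast
  have "norm ((\<psi> \<circ> rho_vec \<rho> \<circ> \<phi>) x - g x) \<le> \<epsilon> / 2" if "x \<in> K" for x
  proof -
    have "norm (x$p) \<le> R" "norm (x$q) \<le> R"
      using R[OF that] Finite_Cartesian_Product.norm_nth_le[of x] by (meson order_trans)+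
    then have "norm (B h k - f'' z h k) \<le> \<eta>" if "norm h = norm (x$p)" "norm k = norm (x$q)" for h k
      using s that unfolding B_def by simp
    then have bound: "norm (rotated_combination c1 c2 c3 c4 (\<lambda>h k. B h k - f'' z h k) (x$p) (x$q)) \<le> C * \<eta>"
      unfolding C_def by (rule norm_rotated_combination_le)
    have "(\<psi> \<circ> rho_vec \<rho> \<circ> \<phi>) x =
        rotated_combination c1 c2 c3 c4 (\<lambda>h k. second_difference \<rho> z (of_real s * h) (of_real s * k)) (x$p) (x$q)
          / of_real (s\<^sup>2) / \<mu>"
      by (simp only: network rotated_combination_divide_coeffs w_def divide_divide_eq_left mult.commute)
    also have "\<dots> = rotated_combination c1 c2 c3 c4 B (x$p) (x$q) / \<mu>"
      unfolding B_def rotated_combination_def by (simp add: scaleR_conv_of_real add_divide_distrib)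
    finally have "(\<psi> \<circ> rho_vec \<rho> \<circ> \<phi>) x - g x =
        rotated_combination c1 c2 c3 c4 (\<lambda>h k. B h k - f'' z h k) (x$p) (x$q) / \<mu>"
      using \<open>\<mu> \<noteq> 0\<close> component[of x] by (simp add: rotated_combination_diff diff_divide_distrib)
    then have "norm ((\<psi> \<circ> rho_vec \<rho> \<circ> \<phi>) x - g x) \<le> C * \<eta> / norm \<mu>"
      using bound \<open>\<mu> \<noteq> 0\<close> by (simp add: norm_divide divide_right_mono)
    also have "\<dots> = \<epsilon> / 2 * (C / (C + 1))"
      unfolding \<eta>_def using \<open>\<mu> \<noteq> 0\<close> by simp
    also have "\<dots> \<le> \<epsilon> / 2"
      using \<open>\<epsilon> > 0\<close> \<open>C \<ge> 0\<close> by (intro mult_left_le) auto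
    finally show ?thesis .
  qed
  then have "(SUP x\<in>K. ereal (norm ((\<psi> \<circ> rho_vec \<rho> \<circ> \<phi>) x - g x))) \<le> ereal (\<epsilon> / 2)"
    by (intro SUP_least) simp
  also have "\<dots> < ereal \<epsilon>"
    using \<open>\<epsilon> > 0\<close> by simp
  finally show ?thesis
    using \<open>C_affine \<phi>\<close> \<open>C_affine_scalar \<psi>\<close> by blast
qed

theorem proposition3p3:
  fixes \<rho> :: "complex \<Rightarrow> complex"
    and K :: "(complex^2) set"
    and \<epsilon> :: real
  assumes "C2_real \<rho>"
    and "\<not> R_affine \<rho>"
    and "compact K"
    and "\<epsilon> > 0"
  shows "\<exists>(\<phi> :: complex^2 \<Rightarrow> complex^12) (\<psi> :: complex^12 \<Rightarrow> complex).
           C_affine \<phi> \<and> C_affine_scalar \<psi> \<and>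
           ((SUP x\<in>K. ereal (norm ((\<psi> \<circ> rho_vec \<rho> \<circ> \<phi>) x - x$1 * x$2))) < ereal \<epsilon> \<or>
            (SUP x\<in>K. ereal (norm ((\<psi> \<circ> rho_vec \<rho> \<circ> \<phi>) x - x$1 * cnj (x$2)))) < ereal \<epsilon> \<or>
            (SUP x\<in>K. ereal (norm ((\<psi> \<circ> rho_vec \<rho> \<circ> \<phi>) x - cnj (x$1 * x$2)))) < ereal \<epsilon>)"
proof -
  obtain f' f'' where f': "\<And>x. (\<rho> has_derivative blinfun_apply (f' x)) (at x)"
    and f'': "\<And>x. (f' has_derivative blinfun_apply (f'' x)) (at x)"
    and "continuous_on UNIV f''"
    using assms(1) unfolding C2_real_def by blast
  then have cont: "isCont f'' z" for z
    by (simp add: continuous_on_eq_continuous_at)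
  obtain z where "f'' z \<noteq> 0"
    using second_derivative_zero_imp_affine[OF f' f''] assms(2) unfolding R_affine_def by blast
  define T where "T = f'' z"
  note approx = second_derivative_component_approximable[OF f' f'' cont[of z] \<open>compact K\<close> \<open>\<epsilon> > 0\<close>, folded T_def]
  from \<open>f'' z \<noteq> 0\<close> have "T \<noteq> 0"
    unfolding T_def .
  from blinfun_complex_component_nonzero[OF this] show ?thesis
  proof (elim disjE)
    assume "T 1 1 - \<i> * T 1 \<i> - \<i> * T \<i> 1 - T \<i> \<i> \<noteq> 0"
    from approx[where p = 1 and q = 2, OF this rotated_combination_blinfun_complex(1)] show ?thesis
      by auto
  next
    assume "T 1 1 + \<i> * T 1 \<i> - \<i> * T \<i> 1 + T \<i> \<i> \<noteq> 0"
    from approx[where p = 1 and q = 2, OF this rotated_combination_blinfun_complex(2)] show ?thesis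
      by auto
  next
    assume "T 1 1 - \<i> * T 1 \<i> + \<i> * T \<i> 1 + T \<i> \<i> \<noteq> 0"
    from approx[where p = 2 and q = 1, OF this rotated_combination_blinfun_complex(3)] show ?thesis
      by (auto simp: mult.commute)
  next
    assume "T 1 1 + \<i> * T 1 \<i> + \<i> * T \<i> 1 - T \<i> \<i> \<noteq> 0"
    from approx[where p = 1 and q = 2, OF this rotated_combination_blinfun_complex(4)] show ?thesis
      by auto
  qed
qed

end
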